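(* Let $H$ be a Hamiltonian cycle of the complete graph $K_n$ on $V=\{1,\dots,n\}$ and let $\delta\in(0,1]$. Then, with probability $1-e^{-\omega(n^{\min\{\delta,1/4\}/2})}$ (as $n\to\infty$), the output of one application of the edge-based random solution generation with the matrix $\Pi^H$ is a $k$-exchange of $H$ for some $k<n^{\delta}$.
   Context: For a Hamiltonian cycle $H$, $\Pi^H=(\pi_{i,j})$ is the symmetric $n\times n$ matrix with $\pi_{i,i}=0$, $\pi_{i,j}=1-\frac1n$ if $\{i,j\}\in H$ and $\pi_{i,j}=\frac{1}{n(n-2)}$ otherwise. Edge-based generation from $\Pi$: start with $B=\emptyset$ and repeatedly add to $B$ an edge $\{i,j\}\notin B$ chosen among the admissible edges with probability proportional to $\pi_{i,j}+\pi_{j,i}$, until $B$ is a Hamiltonian cycle; an edge is admissible if adding it to $B$ creates no vertex of degree $\ge3$ and no cycle with fewer than $n$ edges. A $k$-exchange of $H$ is a Hamiltonian cycle obtained from $H$ by removing $k$ of its edges and adding $k$ edges not in $H$ (for $k=0$ this is $H$ itself). *)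

theory Defs
  imports "HOL-Probability.Probability"
begin

definition Kn_edges :: "nat \<Rightarrow> nat set set" where
  "Kn_edges n = {{i, j} | i j. i \<in> {1..n} \<and> j \<in> {1..n} \<and> i \<noteq> j}"

definition cycle_edges :: "nat list \<Rightarrow> nat set set" where
  "cycle_edges vs = {{vs ! i, vs ! ((i + 1) mod length vs)} | i. i < length vs}"

definition is_cycle :: "nat set set \<Rightarrow> bool" where
  "is_cycle C \<longleftrightarrow> (\<exists>vs. length vs \<ge> 3 \<and> distinct vs \<and> C = cycle_edges vs)"

definition ham_cycle :: "nat \<Rightarrow> nat set set \<Rightarrow> bool" where
  "ham_cycle n C \<longleftrightarrow> (\<exists>vs. length vs \<ge> 3 \<and> distinct vs \<and> set vs = {1..n} \<and> C = cycle_edges vs)"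

definition pi_H :: "nat \<Rightarrow> nat set set \<Rightarrow> nat \<Rightarrow> nat \<Rightarrow> real" where
  "pi_H n H i j = (if i = j then 0
                   else if {i, j} \<in> H then 1 - 1 / real n
                   else 1 / (real n * (real n - 2)))"

definition degree :: "nat set set \<Rightarrow> nat \<Rightarrow> nat" where
  "degree B v = card {e \<in> B. v \<in> e}"

definition admissible :: "nat \<Rightarrow> nat set set \<Rightarrow> nat set \<Rightarrow> bool" where
  "admissible n B e \<longleftrightarrow> e \<in> Kn_edges n \<and> e \<notin> B \<and>
     (\<forall>v. degree (insert e B) v \<le> 2) \<and>
     \<not> (\<exists>C \<subseteq> insert e B. is_cycle C \<and> card C < n)"

definition edge_weight :: "(nat \<Rightarrow> nat \<Rightarrow> real) \<Rightarrow> nat set \<Rightarrow> real" where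
  "edge_weight P e = P (Min e) (Max e) + P (Max e) (Min e)"

definition weighted_choice :: "'a set \<Rightarrow> ('a \<Rightarrow> real) \<Rightarrow> 'a pmf" where
  "weighted_choice A w = embed_pmf (\<lambda>x. if x \<in> A then w x / (\<Sum>y\<in>A. w y) else 0)"

text \<open>Edge-based generation, run with a fuel bound (each step adds one edge, so n steps suffice).\<close>
fun gen_steps :: "(nat \<Rightarrow> nat \<Rightarrow> real) \<Rightarrow> nat \<Rightarrow> nat \<Rightarrow> nat set set \<Rightarrow> nat set set pmf" where
  "gen_steps P n 0 B = return_pmf B"
| "gen_steps P n (Suc m) B =
     (if ham_cycle n B then return_pmf B
      else bind_pmf (weighted_choice {e. admissible n B e} (edge_weight P))
             (\<lambda>e. gen_steps P n m (insert e B)))"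

definition edge_gen :: "nat \<Rightarrow> (nat \<Rightarrow> nat \<Rightarrow> real) \<Rightarrow> nat set set pmf" where
  "edge_gen n P = gen_steps P n n {}"

definition k_exchange :: "nat \<Rightarrow> nat set set \<Rightarrow> nat set set \<Rightarrow> nat \<Rightarrow> bool" where
  "k_exchange n H H' k \<longleftrightarrow> ham_cycle n H' \<and> card (H - H') = k \<and> card (H' - H) = k"

end

theory Submission
  imports Defs
begin

text \<open>
  Throughout the generation the partial solution \<open>B\<close> is the edge set of a partition of the
  vertices into paths, and an edge is admissible exactly when it joins endpoints of two different
  paths (or closes the last remaining path into a Hamiltonian cycle). If \<open>r\<close> paths remain and
  \<open>j\<close> edges of \<open>B\<close> lie outside \<open>H\<close>, then \<open>H\<close> still misses \<open>r + j\<close> edges of which at most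
  \<open>5 j\<close> are blocked; so while \<open>8 j < r\<close> at least \<open>r / 2\<close> admissible edges lie in \<open>H\<close>, each of
  weight about 2, whereas all edges outside \<open>H\<close> together weigh at most 4, and the next edge
  leaves \<open>H\<close> with probability at most \<open>8 / r\<close>. Consequently \<open>e\<^sup>j r\<^sup>1\<^sup>6\<close> does not grow in
  expectation, which bounds the probability of ending with at least \<open>m\<close> edges outside \<open>H\<close> by
  \<open>e\<^bsup>-(m-1)/9\<^esup> n\<^sup>1\<^sup>6\<close>; for \<open>m = \<lceil>n\<^sup>\<delta>\<rceil>\<close> this is \<open>e\<^bsup>-\<omega>(n\<^bsup>\<delta>/2\<^esup>)\<^esup>\<close>.
\<close>

section \<open>Paths and cycles\<close>

fun path_edges :: "'a list \<Rightarrow> 'a set set" where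
  "path_edges (x # y # xs) = insert {x, y} (path_edges (y # xs))"
| "path_edges _ = {}"

lemma path_edges_conv_nth: "path_edges p = (\<lambda>i. {p ! i, p ! Suc i}) ` {..<length p - 1}"
proof (induction p rule: path_edges.induct)
  case (1 x y xs)
  have "{..<length (x # y # xs) - 1} = insert 0 (Suc ` {..<length (y # xs) - 1})"
    by (simp add: lessThan_Suc_eq_insert_0)
  then show ?case using 1 by (simp add: image_image)
qed auto

lemma finite_path_edges [simp]: "finite (path_edges p)"
  by (simp add: path_edges_conv_nth)

lemma path_edges_append:
  "a \<noteq> [] \<Longrightarrow> b \<noteq> [] \<Longrightarrow> path_edges (a @ b) = insert {last a, hd b} (path_edges a \<union> path_edges b)"
proof (induction a rule: path_edges.induct)
  case ("2_2" x) then show ?case by (cases b) auto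
qed auto

lemma path_edges_rev [simp]: "path_edges (rev p) = path_edges p"
proof (induction p rule: path_edges.induct)
  case (1 x y xs)
  have "path_edges (rev (y # xs) @ [x]) = insert {last (rev (y # xs)), x} (path_edges (rev (y # xs)))"
    using path_edges_append[of "rev (y # xs)" "[x]"] by simp
  then show ?case using 1 by (auto simp: insert_commute)
qed auto

lemma path_edges_subset_set: "e \<in> path_edges p \<Longrightarrow> e \<subseteq> set p"
  by (induction p rule: path_edges.induct) auto

lemma path_edges_doubleton: "e \<in> path_edges p \<Longrightarrow> distinct p \<Longrightarrow> \<exists>a b. a \<noteq> b \<and> e = {a, b}"
  by (induction p rule: path_edges.induct) auto

lemma path_edges_incident:
  assumes "distinct p" "i < length p" "e \<in> path_edges p" "p ! i \<in> e"
  shows "(0 < i \<and> e = {p ! (i - 1), p ! i}) \<or> (Suc i < length p \<and> e = {p ! i, p ! Suc i})"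
proof -
  obtain a where a: "Suc a < length p" "e = {p ! a, p ! Suc a}"
    using assms(3) unfolding path_edges_conv_nth by (auto simp: less_diff_conv)
  then have "i = a \<or> i = Suc a"
    using assms by (auto simp: nth_eq_iff_index_eq)
  then show ?thesis using a by auto
qed

lemma card_path_edges:
  assumes "distinct p"
  shows "card (path_edges p) = length p - 1"
proof -
  have "inj_on (\<lambda>i. {p ! i, p ! Suc i}) {..<length p - 1}"
  proof (rule inj_onI)
    fix a b assume "a \<in> {..<length p - 1}" "b \<in> {..<length p - 1}"
      and "{p ! a, p ! Suc a} = {p ! b, p ! Suc b}"
    then have "a = b \<or> (a = Suc b \<and> Suc a = b)"
      using assms by (auto simp: doubleton_eq_iff nth_eq_iff_index_eq)
    then show "a = b" by auto
  qed
  then show ?thesis unfolding path_edges_conv_nth by (simp add: card_image)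
qed

lemma cycle_edges_conv_image:
  "cycle_edges vs = (\<lambda>i. {vs ! i, vs ! (Suc i mod length vs)}) ` {..<length vs}"
  unfolding cycle_edges_def by auto

lemma finite_cycle_edges [simp]: "finite (cycle_edges vs)"
  unfolding cycle_edges_conv_image by simp

lemma cycle_edges_subset_set: "e \<in> cycle_edges vs \<Longrightarrow> e \<subseteq> set vs"
  unfolding cycle_edges_conv_image by (auto intro!: nth_mem mod_less_divisor)

lemma cycle_edges_eq_path_edges:
  assumes "2 \<le> length p"
  shows "cycle_edges p = insert {last p, hd p} (path_edges p)"
proof -
  let ?L = "length p"
  have "{..<?L} = insert (?L - 1) {..<?L - 1}" using assms by auto
  moreover have "Suc (?L - 1) = ?L" using assms by simp
  moreover have "p \<noteq> []" using assms by auto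
  ultimately show ?thesis
    unfolding cycle_edges_conv_image path_edges_conv_nth
    by (auto simp: last_conv_nth hd_conv_nth insert_commute intro!: image_cong)
qed

lemma card_cycle_edges:
  assumes "distinct vs" and "3 \<le> length vs"
  shows "card (cycle_edges vs) = length vs"
proof -
  have "{last vs, hd vs} \<notin> path_edges vs"
  proof
    assume "{last vs, hd vs} \<in> path_edges vs"
    then obtain i where "Suc i < length vs" "{last vs, hd vs} = {vs ! i, vs ! Suc i}"
      unfolding path_edges_conv_nth by (auto simp: less_diff_conv)
    moreover have "hd vs = vs ! 0" "last vs = vs ! (length vs - 1)"
      using assms(2) by (simp_all add: hd_conv_nth last_conv_nth flip: length_greater_0_conv)
    ultimately show False
      using assms by (auto simp: doubleton_eq_iff less_eq_Suc_le nth_eq_iff_index_eq)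
  qed
  then show ?thesis
    using assms by (simp add: cycle_edges_eq_path_edges card_path_edges)
qed

lemma cyclic_pred_succ:
  fixes L i :: nat assumes "3 \<le> L" "i < L"
  shows "Suc ((i + L - 1) mod L) mod L = i" "(i + L - 1) mod L < L"
    "(i + L - 1) mod L \<noteq> Suc i mod L" "(i + L - 1) mod L \<noteq> i" "Suc i mod L \<noteq> i"
proof -
  consider "i = 0" | k where "i = Suc k" by (cases i) auto
  then have "(i + L - 1) mod L = (if i = 0 then L - 1 else i - 1)"
    using assms by cases auto
  moreover have "Suc i mod L = (if Suc i = L then 0 else Suc i)" using assms by auto
  ultimately show "Suc ((i + L - 1) mod L) mod L = i" "(i + L - 1) mod L < L"
    "(i + L - 1) mod L \<noteq> Suc i mod L" "(i + L - 1) mod L \<noteq> i" "Suc i mod L \<noteq> i"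
    using assms by auto
qed

lemma cycle_edges_incident:
  assumes d: "distinct vs" and L: "3 \<le> length vs" and i: "i < length vs"
  defines "pv \<equiv> (i + length vs - 1) mod length vs"
  defines "nx \<equiv> Suc i mod length vs"
  shows "{e \<in> cycle_edges vs. vs ! i \<in> e} = {{vs ! pv, vs ! i}, {vs ! i, vs ! nx}}"
    and "{vs ! pv, vs ! i} \<noteq> {vs ! i, vs ! nx}"
proof -
  note m = cyclic_pred_succ[OF L i, folded pv_def nx_def]
  have nx: "nx < length vs" using i unfolding nx_def by (intro mod_less_divisor) auto
  have neq: "vs ! pv \<noteq> vs ! nx" "vs ! pv \<noteq> vs ! i" "vs ! nx \<noteq> vs ! i"
    using m d i nx by (simp_all add: nth_eq_iff_index_eq)
  show "{vs ! pv, vs ! i} \<noteq> {vs ! i, vs ! nx}" using neq by (auto simp: doubleton_eq_iff)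
  have "vs ! i \<in> {vs ! a, vs ! (Suc a mod length vs)} \<longleftrightarrow> a = i \<or> a = pv" if a: "a < length vs" for a
  proof -
    have "Suc a mod length vs = i \<longleftrightarrow> a = pv"
      using a m(1,2) unfolding pv_def by (auto simp: mod_Suc)
    moreover have "Suc a mod length vs < length vs" using a by (intro mod_less_divisor) auto
    ultimately show ?thesis using a d i by (auto simp: nth_eq_iff_index_eq)
  qed
  then have "{e \<in> cycle_edges vs. vs ! i \<in> e}
      = (\<lambda>a. {vs ! a, vs ! (Suc a mod length vs)}) ` {i, pv}"
    using i m(2) unfolding cycle_edges_conv_image by auto
  then show "{e \<in> cycle_edges vs. vs ! i \<in> e} = {{vs ! pv, vs ! i}, {vs ! i, vs ! nx}}"
    using m(1) unfolding nx_def by (auto simp: insert_commute)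
qed

lemma degree_cycle_edges_le:
  assumes "distinct vs" and "3 \<le> length vs"
  shows "degree (cycle_edges vs) x \<le> 2"
proof (cases "x \<in> set vs")
  case True
  then obtain i where "i < length vs" "x = vs ! i" by (auto simp: in_set_conv_nth)
  then show ?thesis
    unfolding degree_def using cycle_edges_incident(1)[OF assms] by (simp add: card_insert_le_m1)
next
  case False
  then have "{e \<in> cycle_edges vs. x \<in> e} = {}" using cycle_edges_subset_set by blast
  then show ?thesis unfolding degree_def by (simp only: card.empty)
qed

lemma card_subcycle_ge:
  assumes C: "is_cycle C" "C \<subseteq> cycle_edges h" and h: "distinct h" "3 \<le> length h"
  shows "length h \<le> card C"
proof -
  obtain vs where vs: "3 \<le> length vs" "distinct vs" "C = cycle_edges vs"
    using C(1) unfolding is_cycle_def by auto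
  let ?L = "length h"
  have succ_closed: "h ! (Suc i mod ?L) \<in> set vs" if i: "i < ?L" "h ! i \<in> set vs" for i
  proof -
    obtain a where a: "a < length vs" "h ! i = vs ! a" using i(2) by (auto simp: in_set_conv_nth)
    note incident_h = cycle_edges_incident[OF h i(1)]
    have "card {e \<in> C. h ! i \<in> e} = 2"
      using cycle_edges_incident[OF vs(2,1) a(1)] a(2) vs(3) by simp
    moreover have "card {e \<in> cycle_edges h. h ! i \<in> e} = 2" using incident_h by simp
    moreover have "{e \<in> C. h ! i \<in> e} \<subseteq> {e \<in> cycle_edges h. h ! i \<in> e}" using C(2) by auto
    ultimately have "{e \<in> C. h ! i \<in> e} = {e \<in> cycle_edges h. h ! i \<in> e}"
      by (intro card_subset_eq) simp_all
    then have "{h ! i, h ! (Suc i mod ?L)} \<in> C" using incident_h by auto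
    then show ?thesis using cycle_edges_subset_set vs(3) by blast
  qed
  have "{vs ! 0, vs ! (Suc 0 mod length vs)} \<in> C"
    using vs unfolding cycle_edges_conv_image by auto
  then have "vs ! 0 \<in> set h" using C(2) cycle_edges_subset_set by blast
  moreover have "vs ! 0 \<in> set vs" using vs(1) by (intro nth_mem) auto
  ultimately obtain i0 where i0: "i0 < ?L" "h ! i0 \<in> set vs"
    by (metis in_set_conv_nth)
  have orbit: "h ! ((i0 + k) mod ?L) \<in> set vs" for k
  proof (induction k)
    case (Suc k)
    have "(i0 + k) mod ?L < ?L" using i0 by (intro mod_less_divisor) auto
    from succ_closed[OF this Suc] show ?case by (simp add: mod_Suc_eq)
  qed (use i0 in simp)
  have "set h \<subseteq> set vs"
  proof
    fix y assume "y \<in> set h"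
    then obtain k where k: "k < ?L" "y = h ! k" by (auto simp: in_set_conv_nth)
    then have "(i0 + (k + ?L - i0)) mod ?L = k" using i0 by simp
    then show "y \<in> set vs" using orbit[of "k + ?L - i0"] k by simp
  qed
  then have "card (set h) \<le> card (set vs)" by (simp add: card_mono)
  then show ?thesis using h vs by (simp add: distinct_card card_cycle_edges)
qed

lemma ham_cycleE:
  assumes "ham_cycle n H"
  obtains h where "distinct h" "set h = {1..n}" "length h = n" "3 \<le> n" "H = cycle_edges h"
proof -
  obtain h where h: "3 \<le> length h" "distinct h" "set h = {1..n}" "H = cycle_edges h"
    using assms unfolding ham_cycle_def by blast
  moreover have "length h = n" using h by (metis card_atLeastAtMost diff_Suc_1 distinct_card)
  ultimately show thesis using that by simp
qed

lemma card_ham_cycle: "ham_cycle n H \<Longrightarrow> card H = n"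
  by (metis ham_cycleE card_cycle_edges)

lemma finite_ham_cycle: "ham_cycle n H \<Longrightarrow> finite H"
  by (metis ham_cycleE finite_cycle_edges)

lemma degree_ham_cycle_le: "ham_cycle n H \<Longrightarrow> degree H x \<le> 2"
  by (metis ham_cycleE degree_cycle_edges_le)

lemma card_subcycle_of_ham_cycle_ge:
  "ham_cycle n H \<Longrightarrow> C \<subseteq> H \<Longrightarrow> is_cycle C \<Longrightarrow> n \<le> card C"
  by (metis ham_cycleE card_subcycle_ge)

lemma Kn_edgesD: "e \<in> Kn_edges n \<Longrightarrow> \<exists>u v. u \<noteq> v \<and> u \<in> {1..n} \<and> v \<in> {1..n} \<and> e = {u, v}"
  unfolding Kn_edges_def by blast

lemma ham_cycle_subset_Kn_edges:
  assumes "ham_cycle n H"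
  shows "H \<subseteq> Kn_edges n"
proof
  fix e assume "e \<in> H"
  obtain h where h: "distinct h" "set h = {1..n}" "length h = n" "3 \<le> n" "H = cycle_edges h"
    using assms by (rule ham_cycleE)
  then obtain i where i: "i < n" "e = {h ! i, h ! (Suc i mod n)}"
    using \<open>e \<in> H\<close> unfolding cycle_edges_conv_image by auto
  have vertex: "h ! j \<in> {1..n}" if "j < n" for j
    using h(2,3) that nth_mem by blast
  have "Suc i mod n < n" using i by simp
  then have "h ! i \<noteq> h ! (Suc i mod n)" "h ! i \<in> {1..n}" "h ! (Suc i mod n) \<in> {1..n}"
    using cyclic_pred_succ(5)[OF h(4) i(1)] h(1,3) i vertex by (simp_all add: nth_eq_iff_index_eq)
  then show "e \<in> Kn_edges n" unfolding Kn_edges_def using i by blast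
qed

lemma close_path:
  assumes "distinct p" "p \<noteq> []" "hd p \<noteq> last p" "{last p, hd p} \<notin> path_edges p"
  shows "is_cycle (insert {last p, hd p} (path_edges p))"
    and "card (insert {last p, hd p} (path_edges p)) = length p"
proof -
  obtain a q where p: "p = a # q" using assms(2) by (cases p) auto
  have "3 \<le> length p"
  proof (cases q)
    case (Cons b r)
    then show ?thesis using assms(3,4) unfolding p by (cases r) (auto simp: insert_commute)
  qed (use assms(3) p in simp)
  then have "insert {last p, hd p} (path_edges p) = cycle_edges p"
    by (simp add: cycle_edges_eq_path_edges)
  then show "is_cycle (insert {last p, hd p} (path_edges p))"
    and "card (insert {last p, hd p} (path_edges p)) = length p"
    using \<open>3 \<le> length p\<close> assms(1) unfolding is_cycle_def by (auto simp: card_cycle_edges)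
qed

section \<open>Partitions into paths\<close>

text \<open>
  Models the partial solutions of the generation; isolated vertices are paths with one vertex,
  and each list fixes an orientation of its path.
\<close>

definition path_partition :: "nat \<Rightarrow> nat list set \<Rightarrow> bool" where
  "path_partition n P \<longleftrightarrow> finite P \<and> (\<forall>p\<in>P. p \<noteq> [] \<and> distinct p) \<and>
     (\<forall>p\<in>P. \<forall>q\<in>P. p \<noteq> q \<longrightarrow> set p \<inter> set q = {}) \<and> \<Union>(set ` P) = {1..n}"

definition partition_edges :: "'a list set \<Rightarrow> 'a set set" where
  "partition_edges P = \<Union>(path_edges ` P)"

lemma path_partitionD:
  assumes "path_partition n P"
  shows "finite P" "\<And>p. p \<in> P \<Longrightarrow> p \<noteq> []" "\<And>p. p \<in> P \<Longrightarrow> distinct p"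
    "\<And>p q x. p \<in> P \<Longrightarrow> q \<in> P \<Longrightarrow> x \<in> set p \<Longrightarrow> x \<in> set q \<Longrightarrow> p = q"
    "\<Union>(set ` P) = {1..n}"
  using assms unfolding path_partition_def by blast+

lemma finite_partition_edges: "finite P \<Longrightarrow> finite (partition_edges P)"
  unfolding partition_edges_def by simp

lemma singleton_paths:
  "path_partition n ((\<lambda>i. [i]) ` {1..n})" "partition_edges ((\<lambda>i. [i]) ` {1..n}) = {}"
  "card ((\<lambda>i. [i]) ` {1..n}) = n"
  unfolding path_partition_def partition_edges_def by (auto simp: card_image inj_on_def)

lemma path_edges_disjoint:
  assumes ps: "path_partition n P" and pq: "p \<in> P" "q \<in> P" "p \<noteq> q"
  shows "path_edges p \<inter> path_edges q = {}"
proof (rule ccontr)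
  assume "path_edges p \<inter> path_edges q \<noteq> {}"
  then obtain e where e: "e \<in> path_edges p" "e \<in> path_edges q" by blast
  then obtain a b where "e = {a, b}" using path_edges_doubleton path_partitionD(3)[OF ps] pq by blast
  then show False using e pq path_partitionD(4)[OF ps] path_edges_subset_set by blast
qed

lemma card_partition_edges:
  assumes ps: "path_partition n P"
  shows "card (partition_edges P) + card P = n"
proof -
  note D = path_partitionD[OF ps]
  have "card (partition_edges P) = (\<Sum>p\<in>P. card (path_edges p))"
    unfolding partition_edges_def using D(1) path_edges_disjoint[OF ps] by (intro card_UN_disjoint) auto
  also have "\<dots> = (\<Sum>p\<in>P. length p - 1)" using D(3) by (simp add: card_path_edges)
  finally have "card (partition_edges P) + card P = (\<Sum>p\<in>P. length p - 1 + 1)"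
    by (simp add: sum_Suc)
  also have "\<dots> = (\<Sum>p\<in>P. card (set p))"
    using D(2,3) by (intro sum.cong) (auto simp: distinct_card)
  also have "\<dots> = card (\<Union>(set ` P))"
    using D(1,4) by (intro card_UN_disjoint[symmetric]) auto
  finally show ?thesis using D(5) by simp
qed

lemma partition_edges_incident:
  assumes "path_partition n P" "p \<in> P" "x \<in> set p"
  shows "{e \<in> partition_edges P. x \<in> e} = {e \<in> path_edges p. x \<in> e}"
proof -
  have "q = p" if "q \<in> P" "e \<in> path_edges q" "x \<in> e" for q e
    using path_partitionD(4)[OF assms(1) that(1) assms(2) _ assms(3)] path_edges_subset_set[OF that(2)] that(3)
    by blast
  then show ?thesis using assms(2) unfolding partition_edges_def by blast
qed

lemma degree_partition_edges_le:
  assumes "path_partition n P"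
  shows "degree (partition_edges P) x \<le> 2"
proof (cases "\<exists>p\<in>P. x \<in> set p")
  case True
  then obtain p i where p: "p \<in> P" "i < length p" "x = p ! i" by (auto simp: in_set_conv_nth)
  have "{e \<in> path_edges p. x \<in> e} \<subseteq> {{p ! (i - 1), p ! i}, {p ! i, p ! Suc i}}"
    using path_edges_incident[OF path_partitionD(3)[OF assms p(1)] p(2)] p(3) by blast
  then have "card {e \<in> path_edges p. x \<in> e} \<le> card {{p ! (i - 1), p ! i}, {p ! i, p ! Suc i}}"
    by (intro card_mono) auto
  also have "\<dots> \<le> 2" by (simp add: card_insert_le_m1)
  finally have "card {e \<in> path_edges p. x \<in> e} \<le> 2" .
  moreover have "x \<in> set p" using p by simp
  ultimately show ?thesis
    unfolding degree_def using partition_edges_incident[OF assms p(1)] by simp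
next
  case False
  then have "{e \<in> partition_edges P. x \<in> e} = {}"
    unfolding partition_edges_def using path_edges_subset_set by blast
  then show ?thesis unfolding degree_def by (simp only: card.empty)
qed

lemma endpoint_if_degree_le_1:
  assumes ps: "path_partition n P" and p: "p \<in> P" "x \<in> set p" and deg: "degree (partition_edges P) x \<le> 1"
  shows "x = hd p \<or> x = last p"
proof (rule ccontr)
  assume interior: "\<not> (x = hd p \<or> x = last p)"
  obtain i where i: "i < length p" "x = p ! i" using p(2) by (auto simp: in_set_conv_nth)
  have dp: "distinct p" using path_partitionD(3)[OF ps p(1)] .
  have "0 < i" using interior i by (cases i) (auto simp: hd_conv_nth)
  moreover have "Suc i < length p"
    using interior i by (metis Suc_lessI diff_Suc_1 last_conv_nth length_0_conv less_zeroE)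
  ultimately have sub: "{{p ! (i - 1), p ! i}, {p ! i, p ! Suc i}} \<subseteq> {e \<in> path_edges p. x \<in> e}"
    using i unfolding path_edges_conv_nth by (auto intro!: image_eqI[of _ _ "i - 1"])
  moreover have "p ! (i - 1) \<noteq> p ! Suc i" "p ! (i - 1) \<noteq> p ! i"
    using dp i \<open>0 < i\<close> \<open>Suc i < length p\<close> by (simp_all add: nth_eq_iff_index_eq)
  then have "card {{p ! (i - 1), p ! i}, {p ! i, p ! Suc i}} = 2"
    by (simp add: doubleton_eq_iff)
  then have "2 \<le> card {e \<in> path_edges p. x \<in> e}"
    using card_mono[OF _ sub] by simp
  then show False using deg unfolding degree_def partition_edges_incident[OF ps p] by simp
qed

lemma path_edges_acyclic:
  assumes dp: "distinct p" and C: "C \<subseteq> path_edges p" "is_cycle C"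
  shows False
proof -
  obtain vs where vs: "3 \<le> length vs" "distinct vs" "C = cycle_edges vs"
    using C(2) unfolding is_cycle_def by auto
  have "set vs \<subseteq> \<Union>C"
    unfolding vs(3) cycle_edges_conv_image by (force simp: in_set_conv_nth)
  also have "\<dots> \<subseteq> set p" using C(1) path_edges_subset_set by blast
  finally have vs_p: "set vs \<subseteq> set p" .
  have "vs ! 0 \<in> set vs" using vs(1) by (intro nth_mem) auto
  then have "vs ! 0 \<in> set p" using vs_p by blast
  then obtain k where "k < length p" "p ! k = vs ! 0" by (metis in_set_conv_nth)
  then have ex: "\<exists>k. k < length p \<and> p ! k \<in> set vs" using \<open>vs ! 0 \<in> set vs\<close> by auto
  txt \<open>The first vertex of \<open>p\<close> on the cycle has only its forward path edge in \<open>C\<close>,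
    but every vertex of a cycle lies on two of its edges.\<close>
  define m where "m = (LEAST k. k < length p \<and> p ! k \<in> set vs)"
  have m: "m < length p" "p ! m \<in> set vs" using LeastI_ex[OF ex] unfolding m_def by auto
  have before_m: "p ! k \<notin> set vs" if "k < m" for k
    using not_less_Least[OF that[unfolded m_def]] m(1) that by auto
  have "{e \<in> C. p ! m \<in> e} \<subseteq> {{p ! m, p ! Suc m}}"
  proof
    fix e assume e: "e \<in> {e \<in> C. p ! m \<in> e}"
    then have "e \<in> path_edges p" "e \<subseteq> set vs"
      using C(1) vs(3) cycle_edges_subset_set by auto
    then show "e \<in> {{p ! m, p ! Suc m}}"
      using path_edges_incident[OF dp m(1)] e before_m[of "m - 1"] by fastforce
  qed
  then have "card {e \<in> C. p ! m \<in> e} \<le> 1"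
    using card_mono[of "{{p ! m, p ! Suc m}}"] by fastforce
  moreover obtain a where a: "a < length vs" "vs ! a = p ! m" using m(2) by (auto simp: in_set_conv_nth)
  then have "card {e \<in> C. p ! m \<in> e} = 2"
    using cycle_edges_incident[OF vs(2,1) a(1)] vs(3) by (simp add: a(2))
  ultimately show False by simp
qed

lemma partition_edges_acyclic:
  assumes ps: "path_partition n P" and C: "C \<subseteq> partition_edges P" "is_cycle C"
  shows False
proof -
  obtain vs where vs: "3 \<le> length vs" "C = cycle_edges vs" using C(2) unfolding is_cycle_def by auto
  let ?L = "length vs"
  have edge: "{vs ! a, vs ! (Suc a mod ?L)} \<in> C" if "a < ?L" for a
    using that vs(2) unfolding cycle_edges_conv_image by blast
  have "{vs ! 0, vs ! (Suc 0 mod ?L)} \<in> partition_edges P"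
    using vs(1) by (intro subsetD[OF C(1)] edge) auto
  then obtain p where p: "p \<in> P" "{vs ! 0, vs ! (Suc 0 mod ?L)} \<in> path_edges p"
    unfolding partition_edges_def by blast
  have owner: "{vs ! a, vs ! (Suc a mod ?L)} \<in> path_edges p" if a: "a < ?L" "vs ! a \<in> set p" for a
  proof -
    obtain q where q: "q \<in> P" "{vs ! a, vs ! (Suc a mod ?L)} \<in> path_edges q"
      using edge[OF a(1)] C(1) unfolding partition_edges_def by blast
    then have "q = p" using path_partitionD(4)[OF ps q(1) p(1) _ a(2)] path_edges_subset_set by blast
    then show ?thesis using q by simp
  qed
  have on_p: "vs ! (k mod ?L) \<in> set p" for k
  proof (induction k)
    case 0 then show ?case using path_edges_subset_set[OF p(2)] by simp
  next
    case (Suc k)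
    have "k mod ?L < ?L" using vs by (intro mod_less_divisor) auto
    from path_edges_subset_set[OF owner[OF this Suc]] show ?case by (simp add: mod_Suc_eq)
  qed
  have "C \<subseteq> path_edges p"
  proof
    fix e assume "e \<in> C"
    then obtain a where "a < ?L" "e = {vs ! a, vs ! (Suc a mod ?L)}"
      using vs(2) unfolding cycle_edges_conv_image by blast
    then show "e \<in> path_edges p" using owner on_p[of a] by simp
  qed
  then show False using path_edges_acyclic path_partitionD(3)[OF ps p(1)] C(2) by blast
qed

lemma path_partition_join:
  assumes ps: "path_partition n P" and pq: "p \<in> P" "q \<in> P" "p \<noteq> q"
    and u: "u = hd p \<or> u = last p" and v: "v = hd q \<or> v = last q"
  defines "r \<equiv> (if last p = u then p else rev p) @ (if hd q = v then q else rev q)"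
  shows "path_partition n (insert r (P - {p, q}))"
    and "partition_edges (insert r (P - {p, q})) = insert {u, v} (partition_edges P)"
    and "{u, v} \<notin> partition_edges P" and "u \<noteq> v" and "u \<in> {1..n}" and "v \<in> {1..n}"
proof -
  note D = path_partitionD[OF ps]
  have disj: "set p \<inter> set q = {}" using D(4) pq by blast
  have uv: "u \<in> set p" "v \<in> set q" using u v D(2) pq by auto
  show "u \<noteq> v" using uv disj by auto
  show "u \<in> {1..n}" "v \<in> {1..n}" using uv pq D(5) by auto
  have r: "set r = set p \<union> set q" "distinct r" "r \<noteq> []"
    using D(2,3) pq disj unfolding r_def by auto
  have others: "set s \<inter> set r = {}" if "s \<in> P - {p, q}" for s
    using D(4) that pq r(1) by blast
  have "r \<notin> P - {p, q}" using others r(3) by fastforce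
  show "path_partition n (insert r (P - {p, q}))"
    unfolding path_partition_def
  proof (intro conjI ballI impI)
    show "\<Union>(set ` insert r (P - {p, q})) = {1..n}" using D(5) pq r(1) by blast
    fix s t assume st: "s \<in> insert r (P - {p, q})" "t \<in> insert r (P - {p, q})" "s \<noteq> t"
    then consider "s = r" "t \<in> P - {p, q}" | "t = r" "s \<in> P - {p, q}" | "s \<in> P - {p, q}" "t \<in> P - {p, q}"
      by auto
    then show "set s \<inter> set t = {}"
    proof cases
      case 3 then show ?thesis using D(4) st(3) by blast
    qed (use others in \<open>auto simp: Int_commute\<close>)
  qed (use D r in auto)
  have "path_edges r = insert {u, v} (path_edges p \<union> path_edges q)"
    using path_edges_append[of "if last p = u then p else rev p" "if hd q = v then q else rev q"]
      u v D(2) pq unfolding r_def by (auto simp: last_rev hd_rev)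
  then show "partition_edges (insert r (P - {p, q})) = insert {u, v} (partition_edges P)"
    using pq unfolding partition_edges_def by blast
  show "{u, v} \<notin> partition_edges P"
  proof
    assume "{u, v} \<in> partition_edges P"
    then obtain s where "s \<in> P" "{u, v} \<subseteq> set s"
      unfolding partition_edges_def using path_edges_subset_set by blast
    then show False using D(4) pq uv by blast
  qed
qed

section \<open>Admissible edges\<close>

lemma degree_insert:
  assumes "finite B" "e \<notin> B" "x \<in> e"
  shows "degree (insert e B) x = Suc (degree B x)"
proof -
  have "{f \<in> insert e B. x \<in> f} = insert e {f \<in> B. x \<in> f}" using assms by auto
  then show ?thesis unfolding degree_def using assms by simp
qed

lemma admissibleD:
  assumes "admissible n B e"
  shows "e \<in> Kn_edges n" "e \<notin> B" "degree (insert e B) x \<le> 2"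
    "C \<subseteq> insert e B \<Longrightarrow> is_cycle C \<Longrightarrow> card C < n \<Longrightarrow> False"
  using assms unfolding admissible_def by blast+

lemma admissible_endpoint:
  assumes ps: "path_partition n P" and adm: "admissible n (partition_edges P) e" and x: "x \<in> e"
  obtains p where "p \<in> P" "x = hd p \<or> x = last p"
proof -
  have "x \<in> {1..n}" using x Kn_edgesD[OF admissibleD(1)[OF adm]] by blast
  then obtain p where p: "p \<in> P" "x \<in> set p" using path_partitionD(5)[OF ps] by blast
  have "Suc (degree (partition_edges P) x) \<le> 2"
    using admissibleD(3)[OF adm, of x]
      degree_insert[OF finite_partition_edges[OF path_partitionD(1)[OF ps]] admissibleD(2)[OF adm] x]
    by simp
  then show thesis using that endpoint_if_degree_le_1[OF ps p] p(1) by simp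
qed

lemma length_lt_if_other_path:
  assumes ps: "path_partition n P" and p: "p \<in> P" and r: "r \<in> P" "r \<noteq> p"
  shows "length p < n"
proof -
  note D = path_partitionD[OF ps]
  have "length p + length r = card (set p \<union> set r)"
    using D(3,4) p r by (subst card_Un_disjoint) (auto simp: distinct_card)
  also have "\<dots> \<le> card {1..n}" using D(5) p r by (intro card_mono) auto
  finally have "length p + length r \<le> n" by simp
  moreover have "0 < length r" using D(2) r by simp
  ultimately show ?thesis by linarith
qed

lemma short_cycle_closing_path:
  assumes ps: "path_partition n P" and "2 \<le> card P" and p: "p \<in> P"
    and "hd p \<noteq> last p" and "{last p, hd p} \<notin> partition_edges P"
  shows "is_cycle (insert {last p, hd p} (path_edges p))"
    and "card (insert {last p, hd p} (path_edges p)) < n"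
proof -
  note D = path_partitionD[OF ps]
  have "{last p, hd p} \<notin> path_edges p" using assms(5) p unfolding partition_edges_def by blast
  note closed = close_path[OF D(3)[OF p] D(2)[OF p] assms(4) this]
  show "is_cycle (insert {last p, hd p} (path_edges p))" by (fact closed(1))
  have "P \<noteq> {p}" using assms(2) by auto
  then obtain r where "r \<in> P" "r \<noteq> p" using p by blast
  then show "card (insert {last p, hd p} (path_edges p)) < n"
    using closed(2) length_lt_if_other_path[OF ps p] by simp
qed

lemma admissible_joins_paths:
  assumes ps: "path_partition n P" and "2 \<le> card P" and adm: "admissible n (partition_edges P) e"
  obtains p q u v where "p \<in> P" "q \<in> P" "p \<noteq> q" "u = hd p \<or> u = last p" "v = hd q \<or> v = last q"
    "e = {u, v}"
proof -
  obtain u v where uv: "u \<noteq> v" "e = {u, v}" using Kn_edgesD[OF admissibleD(1)[OF adm]] by blast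
  obtain p where p: "p \<in> P" "u = hd p \<or> u = last p"
    using admissible_endpoint[OF ps adm] uv(2) by blast
  obtain q where q: "q \<in> P" "v = hd q \<or> v = last q"
    using admissible_endpoint[OF ps adm] uv(2) by blast
  have "p \<noteq> q"
  proof
    assume "p = q"
    then have e: "e = {last p, hd p}" "hd p \<noteq> last p" using p(2) q(2) uv by auto
    have "{last p, hd p} \<notin> partition_edges P" using admissibleD(2)[OF adm] e(1) by simp
    note short = short_cycle_closing_path[OF ps assms(2) p(1) e(2) this]
    have "insert {last p, hd p} (path_edges p) \<subseteq> insert e (partition_edges P)"
      using e p(1) unfolding partition_edges_def by blast
    from admissibleD(4)[OF adm this short] show False .
  qed
  from that[OF p(1) q(1) this p(2) q(2) uv(2)] show thesis .
qed

lemma admissible_if_joins_paths: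
  assumes ps: "path_partition n P" and pq: "p \<in> P" "q \<in> P" "p \<noteq> q"
    and u: "u = hd p \<or> u = last p" and v: "v = hd q \<or> v = last q"
  shows "admissible n (partition_edges P) {u, v}"
proof -
  note join = path_partition_join[OF ps pq u v]
  show ?thesis unfolding admissible_def
  proof (intro conjI allI notI)
    show "{u, v} \<in> Kn_edges n" unfolding Kn_edges_def using join(4-6) by blast
    show "{u, v} \<in> partition_edges P \<Longrightarrow> False" using join(3) by blast
    fix x show "degree (insert {u, v} (partition_edges P)) x \<le> 2"
      using degree_partition_edges_le[OF join(1)] join(2) by simp
  next
    assume "\<exists>C\<subseteq>insert {u, v} (partition_edges P). is_cycle C \<and> card C < n"
    then show False using partition_edges_acyclic[OF join(1)] unfolding join(2) by blast
  qed
qed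

lemma partition_edges_singleton [simp]: "partition_edges {p} = path_edges p"
  unfolding partition_edges_def by simp

lemma admissible_single_path:
  assumes ps: "path_partition n {p}" and n: "3 \<le> n"
  shows "{e. admissible n (path_edges p) e} = {{last p, hd p}}"
    and "ham_cycle n (insert {last p, hd p} (path_edges p))"
proof -
  note D = path_partitionD[OF ps]
  have sp: "set p = {1..n}" and dp: "distinct p" using D(3,5) by simp_all
  then have lp: "length p = n" by (metis card_atLeastAtMost diff_Suc_1 distinct_card)
  have "p \<noteq> []" using lp n by auto
  then have ends: "hd p \<noteq> last p" "hd p \<in> {1..n}" "last p \<in> {1..n}"
    using dp lp n hd_in_set last_in_set unfolding sp[symmetric]
    by (simp_all add: hd_conv_nth last_conv_nth nth_eq_iff_index_eq)
  have cyc: "insert {last p, hd p} (path_edges p) = cycle_edges p"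
    using cycle_edges_eq_path_edges lp n by simp
  show "ham_cycle n (insert {last p, hd p} (path_edges p))"
    unfolding ham_cycle_def cyc using dp sp lp n by blast
  have "{last p, hd p} \<notin> path_edges p"
  proof
    assume "{last p, hd p} \<in> path_edges p"
    then have "card (cycle_edges p) = card (path_edges p)" using cyc by (simp add: insert_absorb)
    then show False using card_cycle_edges[OF dp] card_path_edges[OF dp] lp n by simp
  qed
  moreover have "{last p, hd p} \<in> Kn_edges n" unfolding Kn_edges_def using ends by blast
  moreover have "degree (cycle_edges p) x \<le> 2" for x using degree_cycle_edges_le dp lp n by simp
  moreover have "\<not> (C \<subseteq> cycle_edges p \<and> is_cycle C \<and> card C < n)" for C
    using card_subcycle_ge[of C p] dp lp n by auto
  ultimately have "admissible n (path_edges p) {last p, hd p}"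
    unfolding admissible_def cyc by blast
  moreover have "e = {last p, hd p}" if adm: "admissible n (path_edges p) e" for e
  proof -
    obtain u v where uv: "u \<noteq> v" "e = {u, v}" using Kn_edgesD[OF admissibleD(1)[OF adm]] by blast
    have "u = hd p \<or> u = last p" "v = hd p \<or> v = last p"
      using admissible_endpoint[OF ps, of e] adm uv(2) by auto
    then show ?thesis using uv by auto
  qed
  ultimately show "{e. admissible n (path_edges p) e} = {{last p, hd p}}" by blast
qed

lemma admissible_nonempty:
  assumes ps: "path_partition n P" and n: "3 \<le> n" and "P \<noteq> {}"
  shows "{e. admissible n (partition_edges P) e} \<noteq> {}"
proof (cases "\<exists>p. P = {p}")
  case True
  then obtain p where "P = {p}" by blast
  then show ?thesis using admissible_single_path(1)[of n p] ps n by auto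
next
  case False
  then obtain p q where pq: "p \<in> P" "q \<in> P" "p \<noteq> q" using assms(3) by blast
  have "admissible n (partition_edges P) {hd p, hd q}" using admissible_if_joins_paths[OF ps pq] by simp
  then show ?thesis by blast
qed

lemma admissible_step:
  assumes ps: "path_partition n P" and "2 \<le> card P" and adm: "admissible n (partition_edges P) e"
  obtains P' where "path_partition n P'" "partition_edges P' = insert e (partition_edges P)"
    "card P' + 1 = card P"
proof -
  obtain p q u v where pq: "p \<in> P" "q \<in> P" "p \<noteq> q" "u = hd p \<or> u = last p" "v = hd q \<or> v = last q"
    and e: "e = {u, v}"
    using admissible_joins_paths[OF ps assms(2) adm] .
  note join = path_partition_join[OF ps pq]
  define P' where "P' = insert ((if last p = u then p else rev p) @ (if hd q = v then q else rev q)) (P - {p, q})"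
  have ps': "path_partition n P'" and B': "partition_edges P' = insert e (partition_edges P)"
    using join e unfolding P'_def by auto
  have "card (partition_edges P') = Suc (card (partition_edges P))"
    unfolding B' using admissibleD(2)[OF adm] finite_partition_edges[OF path_partitionD(1)[OF ps]]
    by simp
  then have "card P' + 1 = card P" using card_partition_edges[OF ps] card_partition_edges[OF ps'] by simp
  with ps' B' show thesis by (rule that)
qed

section \<open>Edges of the Hamiltonian cycle that stay admissible\<close>

lemma card_ham_cycle_diff:
  assumes "path_partition n P" and "ham_cycle n H"
  shows "card (H - partition_edges P) = card P + card (partition_edges P - H)"
  using card_Int_Diff[OF finite_ham_cycle[OF assms(2)], of "partition_edges P"]
    card_Int_Diff[OF finite_partition_edges[OF path_partitionD(1)[OF assms(1)]], of H]
    card_partition_edges[OF assms(1)] card_ham_cycle[OF assms(2)]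
  by (simp add: Int_commute)

lemma interior_vertex_leaves_ham_cycle:
  assumes ps: "path_partition n P" and H: "ham_cycle n H"
    and e: "e \<in> H - partition_edges P" "x \<in> e"
    and p: "p \<in> P" "x \<in> set p" and interior: "x \<noteq> hd p" "x \<noteq> last p"
  shows "\<exists>f \<in> partition_edges P - H. x \<in> f"
proof (rule ccontr)
  let ?B = "partition_edges P"
  assume "\<not> ?thesis"
  then have "insert e {f \<in> ?B. x \<in> f} \<subseteq> {f \<in> H. x \<in> f}" using e by blast
  then have "card (insert e {f \<in> ?B. x \<in> f}) \<le> degree H x"
    unfolding degree_def using finite_ham_cycle[OF H] by (intro card_mono) auto
  moreover have "card (insert e {f \<in> ?B. x \<in> f}) = Suc (degree ?B x)"
    unfolding degree_def using e finite_partition_edges[OF path_partitionD(1)[OF ps]] by simp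
  moreover have "\<not> degree ?B x \<le> 1" using endpoint_if_degree_le_1[OF ps p] interior by blast
  ultimately show False using degree_ham_cycle_le[OF H, of x] by simp
qed

lemma blocked_ham_edge:
  assumes ps: "path_partition n P" and "2 \<le> card P" and H: "ham_cycle n H"
    and e: "e \<in> H - partition_edges P" and blocked: "\<not> admissible n (partition_edges P) e"
  shows "(\<exists>x\<in>e. \<exists>f \<in> partition_edges P - H. x \<in> f) \<or>
    (\<exists>p\<in>P. \<not> path_edges p \<subseteq> H \<and> e = {last p, hd p})"
proof -
  have "e \<in> Kn_edges n" using ham_cycle_subset_Kn_edges[OF H] e by blast
  then obtain u v where uv: "u \<noteq> v" "u \<in> {1..n}" "v \<in> {1..n}" "e = {u, v}"
    by (blast dest: Kn_edgesD)
  obtain p q where p: "p \<in> P" "u \<in> set p" and q: "q \<in> P" "v \<in> set q"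
    using uv path_partitionD(5)[OF ps] by blast
  consider "u \<noteq> hd p" "u \<noteq> last p" | "v \<noteq> hd q" "v \<noteq> last q"
    | "u = hd p \<or> u = last p" "v = hd q \<or> v = last q" by blast
  then show ?thesis
  proof cases
    case 1
    have "u \<in> e" using uv(4) by simp
    then show ?thesis using interior_vertex_leaves_ham_cycle[OF ps H e _ p 1] by blast
  next
    case 2
    have "v \<in> e" using uv(4) by simp
    then show ?thesis using interior_vertex_leaves_ham_cycle[OF ps H e _ q 2] by blast
  next
    case 3
    have "p = q" using admissible_if_joins_paths[OF ps p(1) q(1) _ 3] blocked uv(4) by blast
    then have closing: "e = {last p, hd p}" "hd p \<noteq> last p" using 3 uv by auto
    have "\<not> path_edges p \<subseteq> H"
    proof
      assume "path_edges p \<subseteq> H"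
      then have sub: "insert {last p, hd p} (path_edges p) \<subseteq> H" using closing(1) e by blast
      have "{last p, hd p} \<notin> partition_edges P" using closing(1) e by blast
      note short = short_cycle_closing_path[OF ps assms(2) p(1) closing(2) this]
      show False using card_subcycle_of_ham_cycle_ge[OF H sub short(1)] short(2) by simp
    qed
    then show ?thesis using p(1) closing(1) by blast
  qed
qed

lemma card_ham_edges_near_non_ham_edges:
  assumes ps: "path_partition n P" and H: "ham_cycle n H"
  shows "card {e \<in> H. \<exists>x\<in>e. \<exists>f \<in> partition_edges P - H. x \<in> f} \<le> 4 * card (partition_edges P - H)"
proof -
  let ?D = "partition_edges P - H"
  have fD: "finite ?D" using finite_partition_edges[OF path_partitionD(1)[OF ps]] by simp
  have two: "card f = 2" if "f \<in> ?D" for f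
    using that path_edges_doubleton path_partitionD(3)[OF ps] unfolding partition_edges_def
    by fastforce
  have fV: "finite (\<Union>?D)" using fD two by (intro finite_Union) (auto intro: card_ge_0_finite)
  have "card (\<Union>?D) \<le> (\<Sum>f\<in>?D. card f)" by (rule card_Union_le_sum_card)
  also have "\<dots> = 2 * card ?D" using two by simp
  finally have cV: "card (\<Union>?D) \<le> 2 * card ?D" .
  have "{e \<in> H. \<exists>x\<in>e. \<exists>f \<in> ?D. x \<in> f} = (\<Union>x\<in>\<Union>?D. {e \<in> H. x \<in> e})" by blast
  also have "card \<dots> \<le> (\<Sum>x\<in>\<Union>?D. degree H x)"
    unfolding degree_def using fV by (rule card_UN_le)
  also have "\<dots> \<le> (\<Sum>x\<in>\<Union>?D. 2)" using degree_ham_cycle_le[OF H] by (intro sum_mono)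
  finally show ?thesis using cV by simp
qed

lemma card_paths_leaving_ham_cycle:
  assumes ps: "path_partition n P"
  shows "card {p \<in> P. \<not> path_edges p \<subseteq> H} \<le> card (partition_edges P - H)"
proof -
  let ?Q = "{p \<in> P. \<not> path_edges p \<subseteq> H}"
  have fQ: "finite ?Q" using path_partitionD(1)[OF ps] by simp
  have "card ?Q = (\<Sum>p\<in>?Q. 1)" by simp
  also have "\<dots> \<le> (\<Sum>p\<in>?Q. card (path_edges p - H))"
    by (intro sum_mono) (auto simp: Suc_le_eq card_gt_0_iff)
  also have "\<dots> = card (\<Union>p\<in>?Q. path_edges p - H)"
    using fQ path_edges_disjoint[OF ps] by (intro card_UN_disjoint[symmetric]) auto
  also have "\<dots> \<le> card (partition_edges P - H)"
    using finite_partition_edges[OF path_partitionD(1)[OF ps]]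
    by (intro card_mono) (auto simp: partition_edges_def)
  finally show ?thesis .
qed

lemma card_admissible_ham_edges_ge:
  assumes ps: "path_partition n P" and "2 \<le> card P" and H: "ham_cycle n H"
  shows "card P \<le> card {e \<in> H. admissible n (partition_edges P) e} + 4 * card (partition_edges P - H)"
proof -
  let ?B = "partition_edges P"
  define Admissible where "Admissible = {e \<in> H. admissible n ?B e}"
  define Near where "Near = {e \<in> H. \<exists>x\<in>e. \<exists>f \<in> ?B - H. x \<in> f}"
  define Closing where "Closing = (\<lambda>p. {last p, hd p}) ` {p \<in> P. \<not> path_edges p \<subseteq> H}"
  have "finite Admissible" "finite Near" "finite Closing"
    using finite_ham_cycle[OF H] path_partitionD(1)[OF ps]
    unfolding Admissible_def Near_def Closing_def by simp_all
  moreover have "H - ?B \<subseteq> Admissible \<union> Near \<union> Closing"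
  proof
    fix e assume e: "e \<in> H - ?B"
    show "e \<in> Admissible \<union> Near \<union> Closing"
    proof (cases "admissible n ?B e")
      case True then show ?thesis using e unfolding Admissible_def by blast
    next
      case False
      from blocked_ham_edge[OF ps assms(2) H e False] show ?thesis
        using e unfolding Near_def Closing_def by blast
    qed
  qed
  ultimately have "card (H - ?B) \<le> card (Admissible \<union> Near \<union> Closing)"
    by (intro card_mono) simp_all
  also have "\<dots> \<le> card (Admissible \<union> Near) + card Closing" by (rule card_Un_le)
  also have "\<dots> \<le> card Admissible + card Near + card Closing" using card_Un_le[of Admissible Near] by simp
  finally have "card (H - ?B) \<le> card Admissible + card Near + card Closing" .
  moreover have "card Closing \<le> card (?B - H)"
    unfolding Closing_def using path_partitionD(1)[OF ps]
    by (intro le_trans[OF card_image_le card_paths_leaving_ham_cycle[OF ps]]) simp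
  ultimately show ?thesis
    using card_ham_cycle_diff[OF ps H] card_ham_edges_near_non_ham_edges[OF ps H]
    unfolding Admissible_def Near_def by linarith
qed

section \<open>The random process\<close>

lemma
  assumes fin: "finite A" and ne: "A \<noteq> {}" and pos: "\<And>x. x \<in> A \<Longrightarrow> 0 < w x"
  shows pmf_weighted_choice: "pmf (weighted_choice A w) x = (if x \<in> A then w x / (\<Sum>y\<in>A. w y) else 0)"
    and set_pmf_weighted_choice: "set_pmf (weighted_choice A w) = A"
proof -
  define f where "f x = (if x \<in> A then w x / (\<Sum>y\<in>A. w y) else 0)" for x
  have S: "0 < (\<Sum>y\<in>A. w y)" using fin ne pos by (intro sum_pos) auto
  have nn: "0 \<le> f x" for x unfolding f_def using S pos by (auto intro: less_imp_le)
  have "(\<integral>\<^sup>+x. ennreal (f x) \<partial>count_space UNIV) = (\<integral>\<^sup>+x. ennreal (f x) * indicator A x \<partial>count_space UNIV)"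
    by (intro nn_integral_cong) (auto simp: f_def split: split_indicator)
  also have "\<dots> = (\<integral>\<^sup>+x. ennreal (f x) \<partial>count_space A)"
    by (simp add: nn_integral_count_space_indicator)
  also have "\<dots> = (\<Sum>a\<in>A. ennreal (f a))" using fin by (rule nn_integral_count_space_finite)
  also have "\<dots> = ennreal (\<Sum>a\<in>A. f a)" using nn by (simp add: sum_ennreal)
  also have "(\<Sum>a\<in>A. f a) = (\<Sum>a\<in>A. w a / (\<Sum>y\<in>A. w y))" unfolding f_def by simp
  also have "\<dots> = 1" using S by (simp add: sum_divide_distrib[symmetric])
  finally have total: "(\<integral>\<^sup>+x. ennreal (f x) \<partial>count_space UNIV) = 1" by simp
  have wc: "weighted_choice A w = embed_pmf f" unfolding weighted_choice_def f_def by simp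
  show "pmf (weighted_choice A w) x = (if x \<in> A then w x / (\<Sum>y\<in>A. w y) else 0)"
    unfolding wc using pmf_embed_pmf[of f, OF nn total] f_def by simp
  show "set_pmf (weighted_choice A w) = A"
    unfolding wc using set_embed_pmf[of f, OF nn total] S pos unfolding f_def
    by (auto simp: less_imp_neq[symmetric])
qed

lemma measure_bind_pmf_finite:
  assumes "finite (set_pmf M)"
  shows "measure_pmf.prob (bind_pmf M N) X = (\<Sum>x\<in>set_pmf M. pmf M x * measure_pmf.prob (N x) X)"
proof -
  have "ennreal (measure_pmf.prob (bind_pmf M N) X) = (\<integral>\<^sup>+x. emeasure (N x) X \<partial>M)"
    by (simp add: measure_pmf.emeasure_eq_measure[symmetric])
  also have "\<dots> = (\<Sum>x\<in>set_pmf M. emeasure (N x) X * pmf M x)"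
    using assms by (intro nn_integral_measure_pmf_finite) auto
  also have "\<dots> = (\<Sum>x\<in>set_pmf M. ennreal (pmf M x * measure_pmf.prob (N x) X))"
    by (intro sum.cong) (auto simp: measure_pmf.emeasure_eq_measure ennreal_mult mult.commute)
  also have "\<dots> = ennreal (\<Sum>x\<in>set_pmf M. pmf M x * measure_pmf.prob (N x) X)"
    by (intro sum_ennreal) auto
  finally show ?thesis by (subst (asm) ennreal_inj) (auto intro!: sum_nonneg)
qed

lemma edge_weight_pi_H:
  assumes "e \<in> Kn_edges n"
  shows "edge_weight (pi_H n H) e = (if e \<in> H then 2 * (1 - 1 / real n) else 2 / (real n * (real n - 2)))"
proof -
  obtain u v where "u \<noteq> v" "e = {u, v}" using Kn_edgesD[OF assms] by blast
  then have "Min e \<noteq> Max e" "{Min e, Max e} = e" "{Max e, Min e} = e" by (auto simp: min_def max_def)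
  then show ?thesis unfolding edge_weight_def pi_H_def by auto
qed

lemma edge_weight_pi_H_pos: "3 \<le> n \<Longrightarrow> e \<in> Kn_edges n \<Longrightarrow> 0 < edge_weight (pi_H n H) e"
  by (simp add: edge_weight_pi_H field_simps)

lemma finite_Kn_edges: "finite (Kn_edges n)"
  and card_Kn_edges_le: "card (Kn_edges n) \<le> n * n"
proof -
  have sub: "Kn_edges n \<subseteq> (\<lambda>(i, j). {i, j}) ` ({1..n} \<times> {1..n})" unfolding Kn_edges_def by auto
  then show "finite (Kn_edges n)" by (rule finite_subset) simp
  have "card (Kn_edges n) \<le> card ((\<lambda>(i, j). {i, j}) ` ({1..n} \<times> {1..n}))" using sub by (intro card_mono) auto
  also have "\<dots> \<le> card ({1..n} \<times> {1..n})" by (rule card_image_le) simp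
  finally show "card (Kn_edges n) \<le> n * n" by (simp add: card_cartesian_product)
qed

lemma finite_admissible: "finite {e. admissible n B e}"
  by (rule finite_subset[OF _ finite_Kn_edges]) (auto dest: admissibleD(1))

definition edge_choice :: "nat \<Rightarrow> nat set set \<Rightarrow> nat set set \<Rightarrow> nat set pmf" where
  "edge_choice n H B = weighted_choice {e. admissible n B e} (edge_weight (pi_H n H))"

lemma
  assumes ps: "path_partition n P" and n: "3 \<le> n" and "P \<noteq> {}"
  shows set_pmf_edge_choice: "set_pmf (edge_choice n H (partition_edges P)) = {e. admissible n (partition_edges P) e}"
    and pmf_edge_choice: "pmf (edge_choice n H (partition_edges P)) e =
      (if admissible n (partition_edges P) e then edge_weight (pi_H n H) e /
        (\<Sum>f\<in>{e. admissible n (partition_edges P) e}. edge_weight (pi_H n H) f) else 0)"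
  using set_pmf_weighted_choice[OF finite_admissible admissible_nonempty[OF assms]]
    pmf_weighted_choice[OF finite_admissible admissible_nonempty[OF assms]]
    edge_weight_pi_H_pos[OF n] admissibleD(1)
  unfolding edge_choice_def by auto

lemma gen_steps_Suc_partition:
  assumes "path_partition n P" and "card P = Suc r"
  shows "gen_steps (pi_H n H) n (Suc r) (partition_edges P) =
    bind_pmf (edge_choice n H (partition_edges P)) (\<lambda>e. gen_steps (pi_H n H) n r (insert e (partition_edges P)))"
  using card_ham_cycle[of n "partition_edges P"] card_partition_edges[OF assms(1)] assms(2)
  unfolding edge_choice_def by auto

text \<open>The fuel \<open>card P\<close> equals the number of missing edges, so the fuel bound of
  \<open>gen_steps\<close> is never reached before a Hamiltonian cycle is completed.\<close>

lemma gen_steps_outcome: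
  assumes n: "3 \<le> n"
  shows "path_partition n P \<Longrightarrow> card P = r \<Longrightarrow> 1 \<le> r \<Longrightarrow>
    B' \<in> set_pmf (gen_steps (pi_H n H) n r (partition_edges P)) \<Longrightarrow>
    ham_cycle n B' \<and> card (B' - H) \<le> card (partition_edges P - H) + r"
proof (induction r arbitrary: P B')
  case (Suc r)
  note ps = Suc.prems(1)
  let ?B = "partition_edges P"
  have "P \<noteq> {}" using Suc.prems(2) by auto
  then obtain e where adm: "admissible n ?B e"
    and B': "B' \<in> set_pmf (gen_steps (pi_H n H) n r (insert e ?B))"
    using Suc.prems(4) set_pmf_edge_choice[OF ps n]
    unfolding gen_steps_Suc_partition[OF ps Suc.prems(2)] by auto
  have "card (insert e ?B - H) \<le> card (insert e (?B - H))"
    using finite_partition_edges[OF path_partitionD(1)[OF ps]] by (intro card_mono) auto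
  also have "\<dots> \<le> card (?B - H) + 1" by (simp add: card_insert_le_m1)
  finally have one_more: "card (insert e ?B - H) \<le> card (?B - H) + 1" .
  show ?case
  proof (cases "r = 0")
    case True
    then obtain p where P: "P = {p}" using Suc.prems(2) by (auto simp: card_Suc_eq)
    then have "e = {last p, hd p}" using admissible_single_path(1)[of n p] ps n adm by auto
    moreover have "B' = insert e ?B" using B' True by simp
    ultimately show ?thesis using admissible_single_path(2)[of n p] ps n P one_more True by auto
  next
    case False
    obtain P' where P': "path_partition n P'" "partition_edges P' = insert e ?B" "card P' + 1 = card P"
      using admissible_step[OF ps _ adm] Suc.prems(2) False by auto
    then have "ham_cycle n B' \<and> card (B' - H) \<le> card (insert e ?B - H) + r"
      using Suc.IH[OF P'(1)] Suc.prems(2) False B' by auto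
    then show ?thesis using one_more by simp
  qed
qed simp

lemma sum_edge_weight_outside_le:
  assumes "A \<subseteq> Kn_edges n" and n: "5 \<le> n"
  shows "(\<Sum>e\<in>A - H. edge_weight (pi_H n H) e) \<le> 4"
proof -
  have "(\<Sum>e\<in>A - H. edge_weight (pi_H n H) e) = real (card (A - H)) * (2 / (real n * (real n - 2)))"
    using edge_weight_pi_H assms(1) by (subst sum.cong[OF refl, of _ _ "\<lambda>_. 2 / (real n * (real n - 2))"]) auto
  also have "\<dots> \<le> real (n * n) * (2 / (real n * (real n - 2)))"
  proof (intro mult_right_mono)
    show "real (card (A - H)) \<le> real (n * n)"
      using card_mono[OF finite_Kn_edges, of "A - H" n] card_Kn_edges_le[of n] assms(1)
      by (simp only: of_nat_le_iff) force
  qed (use n in simp)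
  also have "\<dots> = 2 * real n / (real n - 2)" using n by (simp add: field_simps)
  also have "\<dots> \<le> 4" using n by (simp add: field_simps)
  finally show ?thesis .
qed

lemma sum_edge_weight_inside_ge:
  assumes "A \<subseteq> Kn_edges n" and "2 \<le> n"
  shows "real (card (A \<inter> H)) \<le> (\<Sum>e\<in>A \<inter> H. edge_weight (pi_H n H) e)"
proof -
  have "1 / real n \<le> 1 / 2" using assms(2) by (simp add: field_simps)
  then have "1 \<le> edge_weight (pi_H n H) e" if "e \<in> A \<inter> H" for e
    using edge_weight_pi_H[of e n H] that assms(1) by auto
  then have "(\<Sum>e\<in>A \<inter> H. (1::real)) \<le> (\<Sum>e\<in>A \<inter> H. edge_weight (pi_H n H) e)"
    by (intro sum_mono) auto
  then show ?thesis by simp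
qed

text \<open>At least \<open>card P / 2\<close> admissible edges lie in \<open>H\<close>, each of weight at least 1, while the
  admissible edges outside \<open>H\<close> have total weight at most 4.\<close>

lemma prob_non_ham_edge_le:
  assumes ps: "path_partition n P" and "2 \<le> card P" and H: "ham_cycle n H" and n: "5 \<le> n"
    and few: "8 * card (partition_edges P - H) < card P"
  defines "A \<equiv> {e. admissible n (partition_edges P) e}"
  shows "(\<Sum>e\<in>A - H. pmf (edge_choice n H (partition_edges P)) e) \<le> 8 / real (card P)"
proof -
  let ?w = "edge_weight (pi_H n H)"
  define S where "S = (\<Sum>e\<in>A. ?w e)"
  have fA: "finite A" unfolding A_def by (rule finite_admissible)
  have AK: "A \<subseteq> Kn_edges n" unfolding A_def using admissibleD(1) by blast
  have "A \<inter> H = {e \<in> H. admissible n (partition_edges P) e}" unfolding A_def by auto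
  then have "real (card P) / 2 \<le> real (card (A \<inter> H))"
    using card_admissible_ham_edges_ge[OF ps assms(2) H] few by simp
  also have "\<dots> \<le> (\<Sum>e\<in>A \<inter> H. ?w e)" using sum_edge_weight_inside_ge[OF AK] n by simp
  also have "\<dots> \<le> S"
  proof -
    have "0 \<le> (\<Sum>e\<in>A - H. ?w e)"
      using edge_weight_pi_H_pos[of n] AK n by (intro sum_nonneg less_imp_le) auto
    then show ?thesis unfolding S_def sum.Int_Diff[OF fA, of _ H] by simp
  qed
  finally have S_ge: "real (card P) / 2 \<le> S" .
  have "P \<noteq> {}" using assms(2) by auto
  then have "(\<Sum>e\<in>A - H. pmf (edge_choice n H (partition_edges P)) e) = (\<Sum>e\<in>A - H. ?w e) / S"
    using pmf_edge_choice[OF ps] n unfolding A_def S_def by (simp add: sum_divide_distrib)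
  also have "\<dots> \<le> 4 / (real (card P) / 2)"
    using sum_edge_weight_outside_le[OF AK n] S_ge assms(2) by (intro frac_le) auto
  finally show ?thesis by simp
qed

lemma pred_power_mult_le:
  fixes r :: real assumes "1 < r"
  shows "(r - 1) ^ k * (1 + k / r) \<le> r ^ k"
proof -
  have pos: "0 < r - 1" using assms by simp
  have "1 + real k * (1 / (r - 1)) \<le> (1 + 1 / (r - 1)) ^ k"
    by (rule Bernoulli_inequality) (use pos in \<open>simp add: field_simps\<close>)
  also have "1 + 1 / (r - 1) = r / (r - 1)" using pos by (simp add: field_simps)
  finally have Bernoulli: "1 + k / (r - 1) \<le> (r / (r - 1)) ^ k" by simp
  have "(r - 1) ^ k * (1 + k / r) \<le> (r - 1) ^ k * (1 + k / (r - 1))"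
    using pos by (intro mult_left_mono) (auto simp: field_simps)
  also have "\<dots> \<le> (r - 1) ^ k * (r / (r - 1)) ^ k" using Bernoulli pos by (intro mult_left_mono) auto
  also have "\<dots> = r ^ k" using pos by (simp add: power_divide)
  finally show ?thesis .
qed

lemma expected_edge_factor_le:
  assumes ps: "path_partition n P" and "2 \<le> card P" and H: "ham_cycle n H" and n: "5 \<le> n"
    and few: "8 * card (partition_edges P - H) < card P"
  defines "A \<equiv> {e. admissible n (partition_edges P) e}"
  defines "W \<equiv> edge_choice n H (partition_edges P)"
  shows "(\<Sum>e\<in>A. pmf W e * (if e \<in> H then 1 else exp 1)) \<le> 1 + 16 / real (card P)"
proof -
  have fA: "finite A" unfolding A_def by (rule finite_admissible)
  have "P \<noteq> {}" using assms(2) by auto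
  then have "(\<Sum>e\<in>A. pmf W e) = 1"
    using sum_pmf_eq_1[OF fA] set_pmf_edge_choice[OF ps _ _, of H] n unfolding A_def W_def by simp
  then have "(\<Sum>e\<in>A \<inter> H. pmf W e) + (\<Sum>e\<in>A - H. pmf W e) = 1"
    unfolding sum.Int_Diff[OF fA, of _ H] .
  moreover have "(\<Sum>e\<in>A. pmf W e * (if e \<in> H then 1 else exp 1))
      = (\<Sum>e\<in>A \<inter> H. pmf W e) + exp 1 * (\<Sum>e\<in>A - H. pmf W e)"
    unfolding sum.Int_Diff[OF fA, of _ H] by (simp add: sum_distrib_left mult.commute)
  ultimately have "(\<Sum>e\<in>A. pmf W e * (if e \<in> H then 1 else exp 1))
      = 1 + (exp 1 - 1) * (\<Sum>e\<in>A - H. pmf W e)"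
    by (simp add: algebra_simps)
  also have "\<dots> \<le> 1 + 2 * (8 / real (card P))"
    using prob_non_ham_edge_le[OF ps assms(2) H n few] exp_le
    unfolding A_def W_def by (intro add_left_mono mult_mono) (auto intro: sum_nonneg)
  finally show ?thesis by simp
qed

definition bad_outcomes :: "nat \<Rightarrow> nat set set \<Rightarrow> nat \<Rightarrow> nat set set set" where
  "bad_outcomes n H m = {B. \<not> ham_cycle n B \<or> m \<le> card (B - H)}"

text \<open>The exponent 16 absorbs the expected growth factor \<open>1 + 16 / r\<close> of \<open>e\<^sup>j\<close> in one step; the
  shift \<open>(1 - m) / 9\<close> makes the bound trivial as soon as \<open>r \<le> 8 j\<close> while \<open>m \<le> j + r\<close>.\<close>

definition potential :: "nat \<Rightarrow> nat \<Rightarrow> nat \<Rightarrow> real" where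
  "potential m r j = exp (real j + (1 - real m) / 9) * real r ^ 16"

lemma prob_bad_outcomes_unreachable:
  assumes "3 \<le> n" and ps: "path_partition n P" and "P \<noteq> {}"
    and "card (partition_edges P - H) + card P < m"
  shows "measure_pmf.prob (gen_steps (pi_H n H) n (card P) (partition_edges P)) (bad_outcomes n H m) = 0"
proof -
  have "B' \<notin> bad_outcomes n H m" if "B' \<in> set_pmf (gen_steps (pi_H n H) n (card P) (partition_edges P))" for B'
    using gen_steps_outcome[OF assms(1) ps refl _ that] assms(3,4) ps
    unfolding bad_outcomes_def by (auto simp: Suc_le_eq card_gt_0_iff path_partitionD(1))
  then show ?thesis by (subst measure_pmf_zero_iff) blast
qed

lemma one_le_potential:
  assumes "m \<le> 9 * j + 1" and "1 \<le> r"
  shows "1 \<le> potential m r j"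
proof -
  have "0 \<le> real j + (1 - real m) / 9" using assms(1) by (simp add: field_simps)
  then have "1 * 1 \<le> potential m r j"
    unfolding potential_def using assms(2) by (intro mult_mono) auto
  then show ?thesis by simp
qed

lemma prob_bad_outcomes_step:
  assumes ps: "path_partition n P" and r: "card P = Suc r" "r \<noteq> 0" and H: "ham_cycle n H" and n: "5 \<le> n"
    and few: "8 * card (partition_edges P - H) < Suc r"
    and IH: "\<And>P'. path_partition n P' \<Longrightarrow> card P' = r \<Longrightarrow>
      measure_pmf.prob (gen_steps (pi_H n H) n r (partition_edges P')) (bad_outcomes n H m)
        \<le> potential m r (card (partition_edges P' - H))"
  shows "measure_pmf.prob (gen_steps (pi_H n H) n (Suc r) (partition_edges P)) (bad_outcomes n H m)
    \<le> potential m (Suc r) (card (partition_edges P - H))"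
proof -
  let ?B = "partition_edges P" and ?W = "edge_choice n H (partition_edges P)"
    and ?A = "{e. admissible n (partition_edges P) e}"
  define j where "j = card (?B - H)"
  have "2 \<le> card P" "P \<noteq> {}" using r by auto
  have "measure_pmf.prob (gen_steps (pi_H n H) n (Suc r) ?B) (bad_outcomes n H m)
      = (\<Sum>e\<in>?A. pmf ?W e * measure_pmf.prob (gen_steps (pi_H n H) n r (insert e ?B)) (bad_outcomes n H m))"
    unfolding gen_steps_Suc_partition[OF ps r(1)]
    using measure_bind_pmf_finite[of ?W] set_pmf_edge_choice[OF ps _ \<open>P \<noteq> {}\<close>] n finite_admissible
    by simp
  also have "\<dots> \<le> (\<Sum>e\<in>?A. pmf ?W e * (potential m r j * (if e \<in> H then 1 else exp 1)))"
  proof (intro sum_mono mult_left_mono)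
    fix e assume "e \<in> ?A"
    then obtain P' where P': "path_partition n P'" "partition_edges P' = insert e ?B" "card P' + 1 = card P"
      using admissible_step[OF ps \<open>2 \<le> card P\<close>] by auto
    have "card (insert e ?B - H) = j + (if e \<in> H then 0 else 1)"
      using \<open>e \<in> ?A\<close> admissibleD(2) finite_partition_edges[OF path_partitionD(1)[OF ps]]
      unfolding j_def by (auto simp: insert_Diff_if)
    then show "measure_pmf.prob (gen_steps (pi_H n H) n r (insert e ?B)) (bad_outcomes n H m)
        \<le> potential m r j * (if e \<in> H then 1 else exp 1)"
      using IH[OF P'(1)] P' r(1) by (auto simp: potential_def exp_add mult_ac)
  qed simp
  also have "\<dots> = potential m r j * (\<Sum>e\<in>?A. pmf ?W e * (if e \<in> H then 1 else exp 1))"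
    by (simp add: sum_distrib_left mult_ac)
  also have "\<dots> \<le> potential m r j * (1 + 16 / real (Suc r))"
    using expected_edge_factor_le[OF ps \<open>2 \<le> card P\<close> H n] few r(1)
    unfolding j_def by (intro mult_left_mono) (auto simp: potential_def)
  also have "\<dots> \<le> potential m (Suc r) j"
    using pred_power_mult_le[of "real (Suc r)" 16] r(2) unfolding potential_def by (simp add: mult.assoc)
  finally show ?thesis unfolding j_def .
qed

lemma prob_bad_outcomes_le:
  assumes n: "5 \<le> n" and H: "ham_cycle n H"
  shows "path_partition n P \<Longrightarrow> card P = r \<Longrightarrow> 1 \<le> r \<Longrightarrow>
    measure_pmf.prob (gen_steps (pi_H n H) n r (partition_edges P)) (bad_outcomes n H m)
      \<le> potential m r (card (partition_edges P - H))"
proof (induction r arbitrary: P)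
  case (Suc r)
  define j where "j = card (partition_edges P - H)"
  consider (unreachable) "j + Suc r < m" | (trivial) "m \<le> 9 * j + 1" | (step) "8 * j < Suc r" "r \<noteq> 0"
    by linarith
  then show ?case
  proof cases
    case unreachable
    have "P \<noteq> {}" using Suc.prems(2) by auto
    from prob_bad_outcomes_unreachable[of n P H m] this Suc.prems(1,2) n unreachable
    have "measure_pmf.prob (gen_steps (pi_H n H) n (Suc r) (partition_edges P)) (bad_outcomes n H m) = 0"
      unfolding j_def by simp
    then show ?thesis by (simp add: potential_def del: gen_steps.simps)
  next
    case trivial
    then show ?thesis
      using one_le_potential[OF trivial, of "Suc r"]
        measure_pmf.prob_le_1[of "gen_steps (pi_H n H) n (Suc r) (partition_edges P)" "bad_outcomes n H m"]
      unfolding j_def by linarith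
  next
    case step
    then show ?thesis
      using prob_bad_outcomes_step[OF Suc.prems(1,2) step(2) H n] Suc.IH unfolding j_def by simp
  qed
qed simp

lemma prob_edge_gen_bad_le:
  assumes "5 \<le> n" and "ham_cycle n H"
  shows "measure_pmf.prob (edge_gen n (pi_H n H)) (bad_outcomes n H m) \<le> exp ((1 - real m) / 9) * real n ^ 16"
proof -
  let ?P = "(\<lambda>i. [i]) ` {1..n}"
  have "measure_pmf.prob (gen_steps (pi_H n H) n n (partition_edges ?P)) (bad_outcomes n H m)
      \<le> potential m n (card (partition_edges ?P - H))"
    using prob_bad_outcomes_le[OF assms singleton_paths(1)] singleton_paths(3) assms(1) by simp
  then show ?thesis using singleton_paths(2) unfolding edge_gen_def potential_def by simp
qed

lemma k_exchange_if_not_bad: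
  assumes H: "ham_cycle n H" and "B \<notin> bad_outcomes n H m"
  shows "k_exchange n H B (card (B - H))" and "card (B - H) < m"
proof -
  have B: "ham_cycle n B" and "card (B - H) < m" using assms(2) unfolding bad_outcomes_def by auto
  moreover have "card (H - B) = card (B - H)"
    using card_Int_Diff[OF finite_ham_cycle[OF H], of B] card_Int_Diff[OF finite_ham_cycle[OF B], of H]
      card_ham_cycle[OF H] card_ham_cycle[OF B]
    by (simp add: Int_commute)
  ultimately show "k_exchange n H B (card (B - H))" and "card (B - H) < m"
    unfolding k_exchange_def by simp_all
qed

lemma prob_small_exchange_ge:
  assumes "5 \<le> n" and H: "ham_cycle n H"
  shows "1 - exp ((1 - real (nat \<lceil>real n powr \<delta>\<rceil>)) / 9) * real n ^ 16
    \<le> measure_pmf.prob (edge_gen n (pi_H n H)) {B. \<exists>k. real k < real n powr \<delta> \<and> k_exchange n H B k}"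
proof -
  define m where "m = nat \<lceil>real n powr \<delta>\<rceil>"
  let ?M = "edge_gen n (pi_H n H)"
  have "UNIV - bad_outcomes n H m \<subseteq> {B. \<exists>k. real k < real n powr \<delta> \<and> k_exchange n H B k}"
  proof
    fix B assume "B \<in> UNIV - bad_outcomes n H m"
    then have "k_exchange n H B (card (B - H))" "card (B - H) < m"
      using k_exchange_if_not_bad[OF H] by auto
    moreover have "real (card (B - H)) < real n powr \<delta>" using calculation(2) unfolding m_def by linarith
    ultimately show "B \<in> {B. \<exists>k. real k < real n powr \<delta> \<and> k_exchange n H B k}" by blast
  qed
  then have "measure_pmf.prob ?M (UNIV - bad_outcomes n H m)
      \<le> measure_pmf.prob ?M {B. \<exists>k. real k < real n powr \<delta> \<and> k_exchange n H B k}"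
    by (intro measure_pmf.finite_measure_mono) auto
  moreover have "measure_pmf.prob ?M (UNIV - bad_outcomes n H m) = 1 - measure_pmf.prob ?M (bad_outcomes n H m)"
    using measure_pmf.prob_compl[of "bad_outcomes n H m" ?M] by simp
  ultimately show ?thesis using prob_edge_gen_bad_le[OF assms, of m] unfolding m_def by linarith
qed

text \<open>With \<open>y = n\<^bsup>\<delta>/2\<^esup>\<close> one has \<open>n\<^sup>\<delta> = y\<^sup>2\<close>, \<open>ln n \<le> 2 y / \<delta>\<close> and
  \<open>n\<^bsup>min \<delta> (1/4) / 2\<^esup> \<le> y\<close>, so the claim holds once \<open>y \<ge> 1 + 288 / \<delta> + 9 c\<close>.\<close>

lemma potential_decay:
  fixes \<delta> c :: real
  assumes \<delta>: "0 < \<delta>" and c: "0 < c"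
  shows "\<forall>\<^sub>F n in sequentially. exp ((1 - real (nat \<lceil>real n powr \<delta>\<rceil>)) / 9) * real n ^ 16
           \<le> exp (- c * real n powr (min \<delta> (1/4) / 2))"
proof -
  define K where "K = 1 + 288 / \<delta> + 9 * c"
  have K: "1 \<le> K" unfolding K_def using \<delta> c by simp
  have "\<forall>\<^sub>F n in sequentially. K powr (2 / \<delta>) \<le> real n"
    by (rule eventually_ge_at_top[THEN eventually_mono, of "nat \<lceil>K powr (2 / \<delta>)\<rceil>"]) linarith
  moreover have "\<forall>\<^sub>F n in sequentially. 1 \<le> n" by (rule eventually_ge_at_top)
  ultimately show ?thesis
  proof eventually_elim
    case (elim n)
    define x where "x = real n"
    have x: "1 \<le> x" "K powr (2 / \<delta>) \<le> x" using elim unfolding x_def by simp_all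
    define y where "y = x powr (\<delta> / 2)"
    have "K = (K powr (2 / \<delta>)) powr (\<delta> / 2)" using \<delta> K by (simp add: powr_powr)
    also have "\<dots> \<le> y" unfolding y_def using x \<delta> by (intro powr_mono2) auto
    finally have yK: "K \<le> y" .
    have yy: "y * y = x powr \<delta>" unfolding y_def using x by (simp flip: powr_add)
    have "ln x = (2 / \<delta>) * ln y" unfolding y_def using x \<delta> by (simp add: ln_powr)
    also have "\<dots> \<le> (2 / \<delta>) * y" using ln_le_minus_one[of y] yK K \<delta> by (intro mult_left_mono) auto
    finally have lnx: "ln x \<le> (2 / \<delta>) * y" .
    have z: "x powr (min \<delta> (1/4) / 2) \<le> y" unfolding y_def using x \<delta> by (intro powr_mono) auto
    have "x powr \<delta> \<le> real (nat \<lceil>x powr \<delta>\<rceil>)" by linarith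
    moreover have "K * y \<le> y * y" using yK K by (intro mult_right_mono) auto
    moreover have "K * y = y + (288 / \<delta>) * y + 9 * c * y" unfolding K_def by (simp add: algebra_simps)
    moreover have "144 * ((2 / \<delta>) * y) = (288 / \<delta>) * y" by simp
    moreover have "c * x powr (min \<delta> (1/4) / 2) \<le> c * y" using z c by simp
    ultimately have "1 - real (nat \<lceil>x powr \<delta>\<rceil>) + 144 * ln x + 9 * (c * x powr (min \<delta> (1/4) / 2)) \<le> 0"
      using yy lnx yK K by linarith
    then have "(1 - real (nat \<lceil>x powr \<delta>\<rceil>)) / 9 + 16 * ln x \<le> - c * x powr (min \<delta> (1/4) / 2)"
      by (simp add: field_simps)
    then have "exp ((1 - real (nat \<lceil>x powr \<delta>\<rceil>)) / 9) * exp (16 * ln x) \<le> exp (- c * x powr (min \<delta> (1/4) / 2))"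
      by (simp flip: exp_add)
    moreover have "exp (16 * ln x) = x ^ 16" using x ln_realpow[of x 16] exp_ln[of "x ^ 16"] by simp
    ultimately show ?case unfolding x_def by simp
  qed
qed

theorem claim6:
  fixes \<delta> :: real
  assumes "0 < \<delta>" and "\<delta> \<le> 1"
  shows "\<forall>c>0. \<forall>\<^sub>F n in sequentially. \<forall>H. ham_cycle n H \<longrightarrow>
           measure_pmf.prob (edge_gen n (pi_H n H))
             {B. \<exists>k. real k < real n powr \<delta> \<and> k_exchange n H B k}
           \<ge> 1 - exp (- c * real n powr (min \<delta> (1/4) / 2))"
proof (intro allI impI)
  fix c :: real assume "0 < c"
  have "\<forall>\<^sub>F n in sequentially. 5 \<le> n \<and> exp ((1 - real (nat \<lceil>real n powr \<delta>\<rceil>)) / 9) * real n ^ 16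
      \<le> exp (- c * real n powr (min \<delta> (1/4) / 2))"
    using eventually_ge_at_top potential_decay[OF assms(1) \<open>0 < c\<close>] by (rule eventually_conj)
  then show "\<forall>\<^sub>F n in sequentially. \<forall>H. ham_cycle n H \<longrightarrow>
           measure_pmf.prob (edge_gen n (pi_H n H))
             {B. \<exists>k. real k < real n powr \<delta> \<and> k_exchange n H B k}
           \<ge> 1 - exp (- c * real n powr (min \<delta> (1/4) / 2))"
    by eventually_elim (auto intro: order_trans[OF _ prob_small_exchange_ge])
qed

end
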